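(* In the Lie algebra $\mathcal W=\mathcal W(\ell_1,\ell_2,\ell_3,\Gamma)$, the centralizer $\{u\in\mathcal W\mid [u,x^{\alpha}]=0\ \text{for all }\alpha\in\Gamma\}$ of the elements $x^\alpha=x^{\alpha,0}$ equals $\mathcal A[\mathcal D_1]=\mathrm{span}\{x^{\alpha,\vec i}\partial^\mu\mid(\alpha,\vec i)\in\Gamma\times J_1,\ \mu\in\mathbb N^{\ell_1}\times\{0\}^{\ell_2+\ell_3}\}$.
   Context: $\mathbb F$ is a field of characteristic $0$; $\mathbb N=\{0,1,2,\dots\}$. Let $\ell_1,\ell_2,\ell_3\in\mathbb N$ with $\ell=\ell_1+\ell_2+\ell_3>0$, and let $\Gamma$ be an additive subgroup of $\mathbb F^{\ell_2+\ell_3}$ containing an $\mathbb F$-basis of $\mathbb F^{\ell_2+\ell_3}$. Elements $\alpha\in\Gamma$ are written $\alpha=(\alpha_1,\dots,\alpha_\ell)$ with $\alpha_1=\dots=\alpha_{\ell_1}=0$. Let $J=\mathbb N^\ell$, $J_1=\mathbb N^{\ell_1+\ell_2}\times\{0\}^{\ell_3}$; $1_{[p]}$ is the $p$-th unit vector. $\mathcal A=\mathbb F[\Gamma\times J_1]$ has basis $x^{\alpha,\vec i}$ with $x^{\alpha,\vec i}x^{\beta,\vec j}=x^{\alpha+\beta,\vec i+\vec j}$ (out-of-range symbols read as $0$); derivations $\partial_p(x^{\alpha,\vec i})=\alpha_px^{\alpha,\vec i}+i_px^{\alpha,\vec i-1_{[p]}}$, $1\le p\le\ell$; $\mathcal D=\mathrm{span}\{\partial_p\}$,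 $\mathcal D_1=\mathrm{span}\{\partial_1,\dots,\partial_{\ell_1}\}$. $\mathcal W=\mathcal A\otimes\mathbb F[\mathcal D]$ has basis $x^{\alpha,\vec i}\partial^\mu$ ($\mu\in J$) and associative product $u\partial^\mu\cdot v\partial^\nu=\sum_{\lambda\in J}\binom{\mu}{\lambda}u\,\partial^\lambda(v)\,\partial^{\mu+\nu-\lambda}$ ($u,v\in\mathcal A$), with Lie bracket the commutator. *)

theory Defs
  imports Main
begin

(* Conventions (0-indexed coordinates): coordinates p = 0..<l, where l = l1+l2+l3.
   A "degree" alpha is a function nat => 'a vanishing outside [l1, l)  (so alpha_p = 0 for p < l1).
   Multi-indices i, mu are functions nat => nat vanishing outside [0, l).
   An element of A = F[Gamma x J1] is a coefficient function on (alpha, i), finitely supported.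
   An element of W = A (x) F[D] is a coefficient function on (alpha, i, mu), finitely supported:
   u = sum u(alpha,i,mu) x^{alpha,i} d^mu. *)

type_synonym 'a Aelt = "((nat \<Rightarrow> 'a) \<times> (nat \<Rightarrow> nat)) \<Rightarrow> 'a"
type_synonym 'a Welt = "((nat \<Rightarrow> 'a) \<times> (nat \<Rightarrow> nat) \<times> (nat \<Rightarrow> nat)) \<Rightarrow> 'a"

definition Jset :: "nat \<Rightarrow> (nat \<Rightarrow> nat) set" where
  "Jset l = {mu. \<forall>p\<ge>l. mu p = 0}"

definition J1set :: "nat \<Rightarrow> nat \<Rightarrow> (nat \<Rightarrow> nat) set" where
  "J1set l1 l2 = {i. \<forall>p\<ge>l1 + l2. i p = 0}"

definition JD1set :: "nat \<Rightarrow> (nat \<Rightarrow> nat) set" where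
  "JD1set l1 = {mu. \<forall>p\<ge>l1. mu p = 0}"

(* the ambient space F^{l2+l3}, embedded as vectors vanishing outside [l1, l) *)
definition Vspace :: "nat \<Rightarrow> nat \<Rightarrow> (nat \<Rightarrow> 'a::zero) set" where
  "Vspace l1 l = {a. \<forall>p. (p < l1 \<or> l \<le> p) \<longrightarrow> a p = 0}"

definition is_additive_subgroup :: "(nat \<Rightarrow> 'a::ab_group_add) set \<Rightarrow> bool" where
  "is_additive_subgroup G \<longleftrightarrow> (\<lambda>_. 0) \<in> G \<and>
      (\<forall>a\<in>G. \<forall>b\<in>G. (\<lambda>p. a p + b p) \<in> G) \<and> (\<forall>a\<in>G. (\<lambda>p. - a p) \<in> G)"

definition is_basis_of :: "(nat \<Rightarrow> 'a::field) set \<Rightarrow> (nat \<Rightarrow> 'a) set \<Rightarrow> bool" where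
  "is_basis_of B V \<longleftrightarrow> finite B \<and> B \<subseteq> V \<and>
     (\<forall>c. (\<forall>p. (\<Sum>b\<in>B. c b * b p) = 0) \<longrightarrow> (\<forall>b\<in>B. c b = 0)) \<and>
     (\<forall>v\<in>V. \<exists>c. v = (\<lambda>p. \<Sum>b\<in>B. c b * b p))"

definition supp :: "('k \<Rightarrow> 'a::zero) \<Rightarrow> 'k set" where
  "supp f = {k. f k \<noteq> 0}"

definition Aset :: "nat \<Rightarrow> nat \<Rightarrow> (nat \<Rightarrow> 'a::zero) set \<Rightarrow> 'a Aelt set" where
  "Aset l1 l2 G = {f. finite (supp f) \<and>
      (\<forall>a i. f (a, i) \<noteq> 0 \<longrightarrow> a \<in> G \<and> i \<in> J1set l1 l2)}"

definition Wset :: "nat \<Rightarrow> nat \<Rightarrow> nat \<Rightarrow> (nat \<Rightarrow> 'a::zero) set \<Rightarrow> 'a Welt set" where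
  "Wset l1 l2 l3 G = {u. finite (supp u) \<and>
      (\<forall>a i mu. u (a, i, mu) \<noteq> 0 \<longrightarrow> a \<in> G \<and> i \<in> J1set l1 l2 \<and> mu \<in> Jset (l1 + l2 + l3))}"

definition AD1set :: "nat \<Rightarrow> nat \<Rightarrow> nat \<Rightarrow> (nat \<Rightarrow> 'a::zero) set \<Rightarrow> 'a Welt set" where
  "AD1set l1 l2 l3 G = {u \<in> Wset l1 l2 l3 G. \<forall>a i mu. u (a, i, mu) \<noteq> 0 \<longrightarrow> mu \<in> JD1set l1}"

definition monoA :: "(nat \<Rightarrow> 'a::{zero,one}) \<Rightarrow> (nat \<Rightarrow> nat) \<Rightarrow> 'a Aelt" where
  "monoA a i = (\<lambda>k. if k = (a, i) then 1 else 0)"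

definition monoW :: "(nat \<Rightarrow> 'a::{zero,one}) \<Rightarrow> (nat \<Rightarrow> nat) \<Rightarrow> (nat \<Rightarrow> nat) \<Rightarrow> 'a Welt" where
  "monoW a i mu = (\<lambda>k. if k = (a, i, mu) then 1 else 0)"

(* the derivation d_p on A:  d_p(x^{b,j}) = b_p x^{b,j} + j_p x^{b, j - 1_p} *)
definition derA :: "nat \<Rightarrow> 'a::comm_ring_1 Aelt \<Rightarrow> 'a Aelt" where
  "derA p f = (\<lambda>(b, j). b p * f (b, j) + of_nat (j p + 1) * f (b, j(p := j p + 1)))"

(* d^lambda = d_0^{lambda_0} o ... o d_{n-1}^{lambda_{n-1}}  (derivations commute) *)
fun derpowA :: "(nat \<Rightarrow> nat) \<Rightarrow> nat \<Rightarrow> 'a::comm_ring_1 Aelt \<Rightarrow> 'a Aelt" where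
  "derpowA lam 0 f = f"
| "derpowA lam (Suc n) f = (derA n ^^ lam n) (derpowA lam n f)"

(* product in A:  x^{a,i} x^{b,j} = x^{a+b, i+j}, extended bilinearly *)
definition mulA :: "'a::comm_ring_1 Aelt \<Rightarrow> 'a Aelt \<Rightarrow> 'a Aelt" where
  "mulA f g = (\<lambda>(c, k). \<Sum>x\<in>supp f. \<Sum>y\<in>supp g.
      if (\<lambda>p. fst x p + fst y p) = c \<and> (\<lambda>p. snd x p + snd y p) = k then f x * g y else 0)"

definition binomv :: "nat \<Rightarrow> (nat \<Rightarrow> nat) \<Rightarrow> (nat \<Rightarrow> nat) \<Rightarrow> nat" where
  "binomv l mu lam = (\<Prod>p<l. mu p choose lam p)"

(* associative product on W:
   u d^mu . v d^nu = sum_{lam <= mu} binom(mu,lam) u d^lam(v) d^{mu+nu-lam}, extended bilinearly *)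
definition mulW :: "nat \<Rightarrow> 'a::comm_ring_1 Welt \<Rightarrow> 'a Welt \<Rightarrow> 'a Welt" where
  "mulW l u v = (\<lambda>(c, k, rho).
     \<Sum>x\<in>supp u. \<Sum>y\<in>supp v. \<Sum>lam\<in>{lam. \<forall>p. lam p \<le> snd (snd x) p}.
       (case x of (a, i, mu) \<Rightarrow> case y of (b, j, nu) \<Rightarrow>
         if rho = (\<lambda>p. mu p + nu p - lam p)
         then u x * v y * of_nat (binomv l mu lam) *
              mulA (monoA a i) (derpowA lam l (monoA b j)) (c, k)
         else 0))"

definition bracketW :: "nat \<Rightarrow> 'a::comm_ring_1 Welt \<Rightarrow> 'a Welt \<Rightarrow> 'a Welt" where
  "bracketW l u v = (\<lambda>k. mulW l u v k - mulW l v u k)"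

end

theory Submission
  imports Defs
begin

text \<open>
  Because \<partial>^\<lambda>(x^a) = a^\<lambda> x^a, the coefficient of x^(c,k) \<partial>^\<rho> in [u, x^a] is
  \<Sum>_{\<lambda> \<noteq> 0} binom(\<rho> + \<lambda>, \<lambda>) a^\<lambda> u(c - a, k, \<rho> + \<lambda>). If u lies in A[D_1], every \<lambda> occurring
  here lives on the first l1 coordinates, where a vanishes, so u commutes with x^a.

  Conversely, suppose some \<mu> in the support of u has \<mu>_q \<noteq> 0 for some q \<ge> l1. Choose such a term
  u(b, j, \<mu>) with \<mu>_l1 + ... + \<mu>_(l-1) maximal and put \<rho> = \<mu> - 1_[q]. The factor a^\<lambda> kills the
  exponents \<lambda> touching the first l1 coordinates, and maximality kills those of degree \<ge> 2, so the
  coefficient of x^(b+a,j) \<partial>^\<rho> in [u, x^a] is a linear form in a whose q-th coefficient is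
  \<mu>_q u(b, j, \<mu>) \<noteq> 0 (characteristic 0). It vanishes on \<Gamma>, hence on a basis, hence everywhere,
  which is absurd.
\<close>

lemma finite_le_Jset:
  assumes "mu \<in> Jset l"
  shows "finite {lam. \<forall>p. lam p \<le> mu p}"
proof (rule finite_subset)
  let ?M = "\<Sum>p<l. mu p"
  show "{lam. \<forall>p. lam p \<le> mu p} \<subseteq>
      {f. \<forall>p. (p \<in> {..<l} \<longrightarrow> f p \<in> {..?M}) \<and> (p \<notin> {..<l} \<longrightarrow> f p = 0)}"
  proof clarify
    fix lam :: "nat \<Rightarrow> nat" and p assume "\<forall>p. lam p \<le> mu p"
    moreover have "mu p \<le> ?M" if "p < l"
      using that by (intro member_le_sum) auto
    moreover have "mu p = 0" if "\<not> p < l"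
      using that assms by (simp add: Jset_def)
    ultimately show "(p \<in> {..<l} \<longrightarrow> lam p \<in> {..?M}) \<and> (p \<notin> {..<l} \<longrightarrow> lam p = 0)"
      by (metis atMost_iff le_trans lessThan_iff le_zero_eq)
  qed
  show "finite \<dots>"
    by (rule finite_set_of_finite_funs) simp_all
qed

lemma derA_single:
  "derA p (\<lambda>k. if k = (b, \<lambda>_. 0) then t else 0) = (\<lambda>k. if k = (b, \<lambda>_. 0) then b p * t else 0)"
proof -
  have "j(p := j p + 1) \<noteq> (\<lambda>_. 0)" for j :: "nat \<Rightarrow> nat"
    by (metis fun_upd_same add_is_0 one_neq_zero)
  then show ?thesis
    by (auto simp: derA_def)
qed

lemma derpowA_single:
  "derpowA lam n (\<lambda>k. if k = (b, \<lambda>_. 0) then t else 0) =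
     (\<lambda>k. if k = (b, \<lambda>_. 0) then (\<Prod>p<n. b p ^ lam p) * t else 0)"
proof -
  have iter: "(derA p ^^ m) (\<lambda>k. if k = (b, \<lambda>_. 0) then s else 0) =
      (\<lambda>k. if k = (b, \<lambda>_. 0) then b p ^ m * s else 0)" for p m s
    by (induction m) (simp_all add: derA_single mult.assoc cong: if_cong)
  show ?thesis
    by (induction n) (simp_all add: iter mult_ac cong: if_cong)
qed

lemma derpowA_zero: "derpowA (\<lambda>_. 0) n f = f"
  by (induction n) simp_all

lemma mulA_monoA_single:
  "mulA (monoA a i) (\<lambda>k. if k = (b, j) then t else 0) (c, k) =
     (if c = (\<lambda>p. a p + b p) \<and> k = (\<lambda>p. i p + j p) then t else 0)"
proof (cases "t = 0")
  case False
  then have "supp (monoA a i) = {(a, i)}" and "supp (\<lambda>k. if k = (b, j) then t else 0) = {(b, j)}"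
    by (auto simp: supp_def monoA_def)
  then show ?thesis
    by (auto simp: mulA_def monoA_def)
qed (simp add: mulA_def supp_def)

lemma mulA_monoA_monoA:
  "mulA (monoA a i) (monoA b j) (c, k) =
     (if c = (\<lambda>p. a p + b p) \<and> k = (\<lambda>p. i p + j p) then 1 else 0)"
  using mulA_monoA_single[of a i b j 1] by (simp add: monoA_def[of b j])

lemma supp_monoW: "supp (monoW a i mu :: 'a::zero_neq_one Welt) = {(a, i, mu)}"
  by (auto simp: monoW_def supp_def)

lemma mulW_monoW_left:
  fixes u :: "'a::comm_ring_1 Welt"
  assumes "finite (supp u)"
  shows "mulW l (monoW a (\<lambda>_. 0) (\<lambda>_. 0)) u (c, k, rho) = u (\<lambda>p. c p - a p, k, rho)"
proof -
  have zero_only: "{lam. \<forall>p. lam p = (0::nat)} = {\<lambda>_. 0}"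
    by auto
  have "mulW l (monoW a (\<lambda>_. 0) (\<lambda>_. 0)) u (c, k, rho) =
      (\<Sum>y\<in>supp u. case y of (b, j, nu) \<Rightarrow>
         if rho = nu then u y * mulA (monoA a (\<lambda>_. 0)) (monoA b j) (c, k) else 0)"
    unfolding mulW_def supp_monoW
    by (auto intro!: sum.cong simp: zero_only monoW_def binomv_def derpowA_zero)
  also have "\<dots> = (\<Sum>y\<in>supp u. if y = (\<lambda>p. c p - a p, k, rho) then u y else 0)"
  proof (intro sum.cong refl, clarify)
    fix b j nu
    have "c = (\<lambda>p. a p + b p) \<longleftrightarrow> b = (\<lambda>p. c p - a p)"
      by (auto simp: fun_eq_iff algebra_simps)
    then show "(if rho = nu then u (b, j, nu) * mulA (monoA a (\<lambda>_. 0)) (monoA b j) (c, k) else 0) =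
        (if (b, j, nu) = (\<lambda>p. c p - a p, k, rho) then u (b, j, nu) else 0)"
      by (auto simp: mulA_monoA_monoA)
  qed
  also have "\<dots> = u (\<lambda>p. c p - a p, k, rho)"
    using assms by (simp add: supp_def)
  finally show ?thesis .
qed

lemma finite_shift_fiber:
  fixes rho :: "nat \<Rightarrow> nat"
  assumes "finite (supp u)"
  shows "finite {lam. u (b, k, \<lambda>p. rho p + lam p) \<noteq> 0}"
proof -
  have "inj (\<lambda>lam. (b, k, \<lambda>p. rho p + lam p :: nat))"
    by (auto simp: inj_def fun_eq_iff)
  then show ?thesis
    using finite_vimageI[OF assms] by (simp add: vimage_def supp_def)
qed

lemma mulW_monoW_right:
  fixes u :: "'a::comm_ring_1 Welt"
  assumes fin: "finite (supp u)" and J: "\<forall>(b, j, mu) \<in> supp u. mu \<in> Jset l"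
  shows "mulW l u (monoW a (\<lambda>_. 0) (\<lambda>_. 0)) (c, k, rho) =
    (\<Sum>lam | u (\<lambda>p. c p - a p, k, \<lambda>p. rho p + lam p) \<noteq> 0.
       u (\<lambda>p. c p - a p, k, \<lambda>p. rho p + lam p) * of_nat (binomv l (\<lambda>p. rho p + lam p) lam) *
       (\<Prod>p<l. a p ^ lam p))"
proof -
  define b where "b = (\<lambda>p. c p - a p)"
  define L where "L = (\<lambda>x :: (nat \<Rightarrow> 'a) \<times> (nat \<Rightarrow> nat) \<times> (nat \<Rightarrow> nat).
    {lam. \<forall>p. lam p \<le> snd (snd x) p})"
  define P where "P = (\<lambda>(x :: (nat \<Rightarrow> 'a) \<times> (nat \<Rightarrow> nat) \<times> (nat \<Rightarrow> nat)) lam.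
    x = (b, k, \<lambda>p. rho p + lam p))"
  define T where "T = (\<lambda>(x :: (nat \<Rightarrow> 'a) \<times> (nat \<Rightarrow> nat) \<times> (nat \<Rightarrow> nat)) lam.
    u x * of_nat (binomv l (snd (snd x)) lam) * (\<Prod>p<l. a p ^ lam p))"
  have finL: "\<forall>x\<in>supp u. finite (L x)"
    using J finite_le_Jset by (fastforce simp: L_def)
  have "mulW l u (monoW a (\<lambda>_. 0) (\<lambda>_. 0)) (c, k, rho) =
      (\<Sum>x\<in>supp u. \<Sum>lam\<in>L x. case x of (b', j, mu) \<Rightarrow>
         if rho = (\<lambda>p. mu p - lam p)
         then u x * of_nat (binomv l mu lam) * mulA (monoA b' j) (derpowA lam l (monoA a (\<lambda>_. 0))) (c, k)
         else 0)"
    unfolding mulW_def supp_monoW L_def by (simp add: monoW_def split_def cong: if_cong)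
  also have "\<dots> = (\<Sum>x\<in>supp u. \<Sum>lam\<in>L x. if P x lam then T x lam else 0)"
  proof (intro sum.cong refl)
    fix x lam assume "lam \<in> L x"
    moreover obtain b' j mu where x: "x = (b', j, mu)"
      by (cases x)
    ultimately have "(rho = (\<lambda>p. mu p - lam p) \<and> c = (\<lambda>p. b' p + a p) \<and> k = j) \<longleftrightarrow> P x lam"
      by (auto simp: L_def P_def b_def fun_eq_iff algebra_simps)
    then show "(case x of (b', j, mu) \<Rightarrow>
         if rho = (\<lambda>p. mu p - lam p)
         then u x * of_nat (binomv l mu lam) * mulA (monoA b' j) (derpowA lam l (monoA a (\<lambda>_. 0))) (c, k)
         else 0) = (if P x lam then T x lam else 0)"
      unfolding x monoA_def[of a] derpowA_single mulA_monoA_single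
      by (auto simp: T_def)
  qed
  also have "\<dots> = (\<Sum>z\<in>{z \<in> Sigma (supp u) L. P (fst z) (snd z)}. T (fst z) (snd z))"
    using fin finL by (simp add: sum.Sigma sum.inter_filter split_def)
  also have "\<dots> = (\<Sum>lam | u (b, k, \<lambda>p. rho p + lam p) \<noteq> 0. T (b, k, \<lambda>p. rho p + lam p) lam)"
    by (rule sum.reindex_bij_witness[where i = "\<lambda>lam. ((b, k, \<lambda>p. rho p + lam p), lam)" and j = snd])
      (auto simp: P_def L_def supp_def)
  finally show ?thesis
    by (simp add: T_def b_def)
qed

lemma bracketW_monoW:
  fixes u :: "'a::comm_ring_1 Welt"
  assumes fin: "finite (supp u)" and J: "\<forall>(b, j, mu) \<in> supp u. mu \<in> Jset l"
  shows "bracketW l u (monoW a (\<lambda>_. 0) (\<lambda>_. 0)) (c, k, rho) =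
    (\<Sum>lam | lam \<noteq> (\<lambda>_. 0) \<and> u (\<lambda>p. c p - a p, k, \<lambda>p. rho p + lam p) \<noteq> 0.
       u (\<lambda>p. c p - a p, k, \<lambda>p. rho p + lam p) * of_nat (binomv l (\<lambda>p. rho p + lam p) lam) *
       (\<Prod>p<l. a p ^ lam p))"
proof -
  define \<Lambda> where "\<Lambda> = {lam. u (\<lambda>p. c p - a p, k, \<lambda>p. rho p + lam p) \<noteq> 0}"
  define f where "f = (\<lambda>lam. u (\<lambda>p. c p - a p, k, \<lambda>p. rho p + lam p) *
    of_nat (binomv l (\<lambda>p. rho p + lam p) lam) * (\<Prod>p<l. a p ^ lam p))"
  have f_zero: "f (\<lambda>_. 0) = u (\<lambda>p. c p - a p, k, rho)"
    by (simp add: f_def binomv_def)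
  have "finite \<Lambda>"
    unfolding \<Lambda>_def by (rule finite_shift_fiber[OF fin])
  then have "sum f \<Lambda> = u (\<lambda>p. c p - a p, k, rho) + sum f (\<Lambda> - {\<lambda>_. 0})"
    by (cases "(\<lambda>_. 0) \<in> \<Lambda>") (auto simp: sum.remove \<Lambda>_def f_zero[symmetric])
  moreover have "\<Lambda> - {\<lambda>_. 0} = {lam. lam \<noteq> (\<lambda>_. 0) \<and> u (\<lambda>p. c p - a p, k, \<lambda>p. rho p + lam p) \<noteq> 0}"
    by (auto simp: \<Lambda>_def)
  ultimately show ?thesis
    using mulW_monoW_right[OF assms] mulW_monoW_left[OF fin]
    by (simp add: bracketW_def \<Lambda>_def f_def)
qed

lemma Wset_supp:
  assumes "u \<in> Wset l1 l2 l3 G"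
  shows "finite (supp u)" and "\<forall>(b, j, mu) \<in> supp u. mu \<in> Jset (l1 + l2 + l3)"
  using assms by (auto simp: Wset_def supp_def)

lemma bracketW_monoW_eq_0_if_AD1set:
  fixes u :: "'a::comm_ring_1 Welt"
  assumes u: "u \<in> AD1set l1 l2 l3 G" and a: "a \<in> Vspace l1 l" and l: "l = l1 + l2 + l3"
  shows "bracketW l u (monoW a (\<lambda>_. 0) (\<lambda>_. 0)) = (\<lambda>_. 0)"
proof (rule ext, clarify)
  fix c k rho
  have "(\<Prod>p<l. a p ^ lam p) = 0"
    if "lam \<noteq> (\<lambda>_. 0)" and "u (\<lambda>p. c p - a p, k, \<lambda>p. rho p + lam p) \<noteq> 0" for lam
  proof -
    obtain p where "lam p \<noteq> 0"
      using \<open>lam \<noteq> (\<lambda>_. 0)\<close> by auto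
    moreover have "(\<lambda>p. rho p + lam p) \<in> JD1set l1"
      using u that(2) by (auto simp: AD1set_def)
    ultimately have "p < l1"
      by (auto simp: JD1set_def not_less[symmetric])
    then have "p < l" and "a p ^ lam p = 0"
      using l a \<open>lam p \<noteq> 0\<close> by (auto simp: Vspace_def zero_power)
    then show ?thesis
      by (intro prod_zero) auto
  qed
  moreover have "finite (supp u)" and "\<forall>(b, j, mu) \<in> supp u. mu \<in> Jset l"
    using u Wset_supp[of u l1 l2 l3 G] l by (auto simp: AD1set_def)
  ultimately show "bracketW l u (monoW a (\<lambda>_. 0) (\<lambda>_. 0)) (c, k, rho) = 0"
    by (simp add: bracketW_monoW)
qed

definition unit_vec :: "nat \<Rightarrow> nat \<Rightarrow> 'b::zero_neq_one" where
  "unit_vec r = (\<lambda>p. if p = r then 1 else 0)"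

lemma unit_vec_neq_zero: "unit_vec r \<noteq> (\<lambda>_. 0)"
  by (metis unit_vec_def zero_neq_one)

lemma inj_unit_vec: "inj (unit_vec :: nat \<Rightarrow> nat \<Rightarrow> 'b::zero_neq_one)"
  by (rule injI) (metis unit_vec_def zero_neq_one)

lemma sum_ge_2_if_not_unit_vec:
  fixes lam :: "nat \<Rightarrow> nat"
  assumes "finite R" and "lam \<noteq> (\<lambda>_. 0)" and "\<forall>p. p \<notin> R \<longrightarrow> lam p = 0"
    and "\<forall>r\<in>R. lam \<noteq> unit_vec r"
  shows "2 \<le> (\<Sum>p\<in>R. lam p)"
proof -
  obtain p where p: "lam p \<noteq> 0"
    using assms(2) by auto
  then have "p \<in> R"
    using assms(3) by auto
  show ?thesis
  proof (cases "lam p \<ge> 2")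
    case True
    then show ?thesis
      using member_le_sum[OF \<open>p \<in> R\<close>, of lam] assms(1) by simp
  next
    case False
    then have "lam p = 1"
      using p by simp
    moreover obtain p' where "lam p' \<noteq> unit_vec p p'"
      using assms(4) \<open>p \<in> R\<close> by auto
    ultimately have "p' \<noteq> p" and "lam p' \<noteq> 0"
      by (auto simp: unit_vec_def split: if_splits)
    then have "p' \<in> R"
      using assms(3) by auto
    have "lam p + lam p' = (\<Sum>p\<in>{p, p'}. lam p)"
      using \<open>p' \<noteq> p\<close> by simp
    also have "\<dots> \<le> (\<Sum>p\<in>R. lam p)"
      using assms(1) \<open>p \<in> R\<close> \<open>p' \<in> R\<close> by (intro sum_mono2) auto
    finally show ?thesis
      using \<open>lam p = 1\<close> \<open>lam p' \<noteq> 0\<close> by simp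
  qed
qed

lemma binomv_unit_vec:
  assumes "r < l"
  shows "binomv l mu (unit_vec r) = mu r"
proof -
  have "binomv l mu (unit_vec r) = (\<Prod>p<l. if p = r then mu r else 1)"
    unfolding binomv_def by (intro prod.cong) (auto simp: unit_vec_def)
  then show ?thesis
    using assms by simp
qed

lemma prod_power_unit_vec:
  fixes a :: "nat \<Rightarrow> 'a::comm_monoid_mult"
  assumes "r < l"
  shows "(\<Prod>p<l. a p ^ unit_vec r p) = a r"
proof -
  have "(\<Prod>p<l. a p ^ unit_vec r p) = (\<Prod>p<l. if p = r then a r else 1)"
    by (intro prod.cong) (auto simp: unit_vec_def)
  then show ?thesis
    using assms by simp
qed

lemma exponent_unit_vec_if_top_degree:
  fixes lam rho :: "nat \<Rightarrow> nat" and a :: "nat \<Rightarrow> 'a::comm_semiring_1"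
  assumes a: "a \<in> Vspace l1 l" and "(\<Prod>p<l. a p ^ lam p) \<noteq> 0"
    and lam: "lam \<noteq> (\<lambda>_. 0)" "\<forall>p\<ge>l. lam p = 0"
    and top: "(\<lambda>p. rho p + lam p) \<notin> JD1set l1 \<Longrightarrow>
      (\<Sum>p\<in>{l1..<l}. rho p + lam p) \<le> (\<Sum>p\<in>{l1..<l}. rho p) + 1"
  shows "lam \<in> unit_vec ` {l1..<l}"
proof (rule ccontr)
  assume not_unit: "lam \<notin> unit_vec ` {l1..<l}"
  have below: "lam p = 0" if "p < l1" for p
  proof (rule ccontr)
    assume "lam p \<noteq> 0"
    then have "p < l"
      using lam(2) by (meson not_le)
    moreover have "a p = 0"
      using a that by (simp add: Vspace_def)
    ultimately have "(\<Prod>p<l. a p ^ lam p) = 0"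
      using \<open>lam p \<noteq> 0\<close> by (intro prod_zero) (auto simp: zero_power intro!: bexI[of _ p])
    then show False
      using assms(2) by simp
  qed
  have two: "2 \<le> (\<Sum>p\<in>{l1..<l}. lam p)"
    using lam below not_unit by (intro sum_ge_2_if_not_unit_vec) (auto simp: not_le)
  obtain p where "lam p \<noteq> 0"
    using lam(1) by auto
  then have "l1 \<le> p"
    using below by (meson not_le)
  then have "(\<lambda>p. rho p + lam p) \<notin> JD1set l1"
    using \<open>lam p \<noteq> 0\<close> by (auto simp: JD1set_def intro!: exI[of _ p])
  with top two show False
    by (simp add: sum.distrib)
qed

text \<open>Since \<open>\<partial>\<^sup>\<lambda>(x\<^sup>a) = a\<^sup>\<lambda> x\<^sup>a\<close>, a monomial \<open>a\<^sup>\<lambda>\<close> with \<open>\<lambda>\<close> touching the first \<open>l1\<close> coordinates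
  vanishes on \<open>Vspace l1 l\<close>; in the top degree the remaining exponents of degree \<open>\<ge> 2\<close> do not
  occur either, so the bracket is a linear form in \<open>a\<close>.\<close>

lemma bracketW_monoW_top_degree:
  fixes u :: "'a::comm_ring_1 Welt" and rho :: "nat \<Rightarrow> nat"
  assumes fin: "finite (supp u)" and J: "\<forall>(b, j, mu) \<in> supp u. mu \<in> Jset l"
    and a: "a \<in> Vspace l1 l"
    and top: "\<And>mu. u (a0, k0, mu) \<noteq> 0 \<Longrightarrow> mu \<notin> JD1set l1 \<Longrightarrow>
      (\<Sum>p\<in>{l1..<l}. mu p) \<le> (\<Sum>p\<in>{l1..<l}. rho p) + 1"
  shows "bracketW l u (monoW a (\<lambda>_. 0) (\<lambda>_. 0)) (\<lambda>p. a0 p + a p, k0, rho) =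
    (\<Sum>r\<in>{l1..<l}. a r * (of_nat (rho r + 1) * u (a0, k0, \<lambda>p. rho p + unit_vec r p)))"
proof -
  define R where "R = {l1..<l}"
  define f where "f = (\<lambda>lam. u (a0, k0, \<lambda>p. rho p + lam p) *
    of_nat (binomv l (\<lambda>p. rho p + lam p) lam) * (\<Prod>p<l. a p ^ lam p))"
  define \<Lambda> where "\<Lambda> = {lam. lam \<noteq> (\<lambda>_. 0) \<and> u (a0, k0, \<lambda>p. rho p + lam p) \<noteq> 0}"
  have "bracketW l u (monoW a (\<lambda>_. 0) (\<lambda>_. 0)) (\<lambda>p. a0 p + a p, k0, rho) = sum f \<Lambda>"
    using bracketW_monoW[OF fin J, of a "\<lambda>p. a0 p + a p" k0 rho] by (simp add: f_def \<Lambda>_def)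
  also have "\<dots> = sum f (unit_vec ` R)"
  proof (rule sum.mono_neutral_cong)
    show "finite \<Lambda>"
      by (rule finite_subset[OF _ finite_shift_fiber[OF fin]]) (auto simp: \<Lambda>_def)
    show "finite (unit_vec ` R)"
      by (simp add: R_def)
    show "f lam = 0" if "lam \<in> unit_vec ` R - \<Lambda>" for lam
    proof -
      have "lam \<noteq> (\<lambda>_. 0)"
        using that unit_vec_neq_zero by auto
      then show ?thesis
        using that by (simp add: \<Lambda>_def f_def)
    qed
    show "f lam = 0" if "lam \<in> \<Lambda> - unit_vec ` R" for lam
    proof (rule ccontr)
      assume "f lam \<noteq> 0"
      have "u (a0, k0, \<lambda>p. rho p + lam p) \<noteq> 0" and "lam \<noteq> (\<lambda>_. 0)"
        using that by (auto simp: \<Lambda>_def)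
      moreover from this have "\<forall>p\<ge>l. lam p = 0"
        using J by (fastforce simp: supp_def Jset_def)
      ultimately have "lam \<in> unit_vec ` R"
        using \<open>f lam \<noteq> 0\<close> top unfolding R_def
        by (intro exponent_unit_vec_if_top_degree[OF a]) (auto simp: f_def)
      then show False
        using that by blast
    qed
  qed simp
  also have "\<dots> = (\<Sum>r\<in>R. f (unit_vec r))"
    using inj_on_subset[OF inj_unit_vec subset_UNIV] by (rule sum.reindex[unfolded comp_def])
  also have "\<dots> = (\<Sum>r\<in>R. a r * (of_nat (rho r + 1) * u (a0, k0, \<lambda>p. rho p + unit_vec r p)))"
  proof (intro sum.cong refl)
    fix r assume "r \<in> R"
    then have "r < l"
      by (simp add: R_def)
    then show "f (unit_vec r) = a r * (of_nat (rho r + 1) * u (a0, k0, \<lambda>p. rho p + unit_vec r p))"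
      using binomv_unit_vec[of r l] prod_power_unit_vec[of r l a]
      by (simp add: f_def) (simp add: unit_vec_def algebra_simps)
  qed
  finally show ?thesis
    by (simp add: R_def)
qed

lemma linear_form_vanishes_if_vanishes_on_basis:
  fixes w :: "nat \<Rightarrow> 'a::field"
  assumes "is_basis_of B V" and "\<forall>b\<in>B. (\<Sum>r\<in>R. b r * w r) = 0" and "v \<in> V"
  shows "(\<Sum>r\<in>R. v r * w r) = 0"
proof -
  obtain c where v: "v = (\<lambda>p. \<Sum>b\<in>B. c b * b p)"
    using assms(1,3) by (auto simp: is_basis_of_def)
  have "(\<Sum>r\<in>R. v r * w r) = (\<Sum>b\<in>B. c b * (\<Sum>r\<in>R. b r * w r))"
    by (simp add: v sum_distrib_left sum_distrib_right sum.swap[of _ R] mult.assoc)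
  also have "\<dots> = 0"
    using assms(2) by simp
  finally show ?thesis .
qed

lemma centralizer_top_degree_coeff_eq_0:
  fixes u :: "'a::field_char_0 Welt"
  assumes fin: "finite (supp u)" and J: "\<forall>(b, j, mu) \<in> supp u. mu \<in> Jset l"
    and B: "B \<subseteq> G" "is_basis_of B (Vspace l1 l)"
    and central: "\<forall>a\<in>G. bracketW l u (monoW a (\<lambda>_. 0) (\<lambda>_. 0)) = (\<lambda>_. 0)"
    and q: "q \<in> {l1..<l}" "mu0 q \<noteq> 0"
    and top: "\<And>mu. u (a0, k0, mu) \<noteq> 0 \<Longrightarrow> mu \<notin> JD1set l1 \<Longrightarrow>
      (\<Sum>p\<in>{l1..<l}. mu p) \<le> (\<Sum>p\<in>{l1..<l}. mu0 p)"
  shows "u (a0, k0, mu0) = 0"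
proof -
  define R where "R = {l1..<l}"
  define rho where "rho = mu0(q := mu0 q - 1)"
  define w where "w = (\<lambda>r. of_nat (rho r + 1) * u (a0, k0, \<lambda>p. rho p + unit_vec r p))"
  have mu0: "(\<lambda>p. rho p + unit_vec q p) = mu0"
    using q(2) by (auto simp: rho_def unit_vec_def)
  have "(\<Sum>p\<in>R. mu0 p) = (\<Sum>p\<in>R. rho p) + (\<Sum>p\<in>R. unit_vec q p)"
    by (simp add: sum.distrib flip: mu0)
  also have "(\<Sum>p\<in>R. unit_vec q p) = (1::nat)"
    using q(1) by (simp add: unit_vec_def R_def)
  finally have deg_mu0: "(\<Sum>p\<in>R. mu0 p) = (\<Sum>p\<in>R. rho p) + 1" .
  have "(\<Sum>r\<in>R. b r * w r) = 0" if "b \<in> B" for b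
  proof -
    have "b \<in> G" and "b \<in> Vspace l1 l"
      using that B by (auto simp: is_basis_of_def)
    then have "(\<Sum>r\<in>R. b r * w r) = bracketW l u (monoW b (\<lambda>_. 0) (\<lambda>_. 0)) (\<lambda>p. a0 p + b p, k0, rho)"
      using bracketW_monoW_top_degree[OF fin J, of b l1 a0 k0 rho] top deg_mu0
      by (simp add: w_def R_def)
    also have "\<dots> = 0"
      using central \<open>b \<in> G\<close> by simp
    finally show ?thesis .
  qed
  moreover have "unit_vec q \<in> Vspace l1 l"
    using q(1) by (auto simp: Vspace_def unit_vec_def)
  ultimately have "(\<Sum>r\<in>R. unit_vec q r * w r) = 0"
    using linear_form_vanishes_if_vanishes_on_basis[OF B(2)] by blast
  moreover have "(\<Sum>r\<in>R. unit_vec q r * w r) = (\<Sum>r\<in>R. if r = q then w q else 0)"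
    by (intro sum.cong) (auto simp: unit_vec_def)
  ultimately have "w q = 0"
    using q(1) by (simp add: R_def)
  moreover have "rho q + 1 = mu0 q"
    using q(2) by (simp add: rho_def)
  then have "w q = of_nat (mu0 q) * u (a0, k0, mu0)"
    by (simp only: w_def mu0)
  ultimately show ?thesis
    using q(2) by simp
qed

lemma finite_has_max_image:
  fixes f :: "'b \<Rightarrow> 'c::linorder"
  assumes "finite S" and "S \<noteq> {}"
  obtains x where "x \<in> S" and "\<And>y. y \<in> S \<Longrightarrow> f y \<le> f x"
proof -
  have "Max (f ` S) \<in> f ` S"
    using assms by (intro Max_in) auto
  moreover have "f y \<le> Max (f ` S)" if "y \<in> S" for y
    using assms(1) that by (intro Max_ge) auto
  ultimately show ?thesis
    using that by auto
qed

lemma centralizer_subset_AD1set: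
  fixes u :: "'a::field_char_0 Welt"
  assumes B: "B \<subseteq> G" "is_basis_of B (Vspace l1 l)" and l: "l = l1 + l2 + l3"
    and u: "u \<in> Wset l1 l2 l3 G"
    and central: "\<forall>a\<in>G. bracketW l u (monoW a (\<lambda>_. 0) (\<lambda>_. 0)) = (\<lambda>_. 0)"
  shows "u \<in> AD1set l1 l2 l3 G"
proof (rule ccontr)
  define S where "S = {x \<in> supp u. snd (snd x) \<notin> JD1set l1}"
  have fin: "finite (supp u)" and J: "\<forall>(b, j, mu) \<in> supp u. mu \<in> Jset l"
    using Wset_supp[OF u] l by auto
  assume "u \<notin> AD1set l1 l2 l3 G"
  have "finite S"
    using fin by (simp add: S_def)
  moreover have "S \<noteq> {}"
    using \<open>u \<notin> AD1set l1 l2 l3 G\<close> u by (auto simp: AD1set_def S_def supp_def)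
  ultimately obtain x0 where "x0 \<in> S"
    and max: "\<And>x. x \<in> S \<Longrightarrow> (\<Sum>p\<in>{l1..<l}. snd (snd x) p) \<le> (\<Sum>p\<in>{l1..<l}. snd (snd x0) p)"
    by (rule finite_has_max_image[where f = "\<lambda>x. \<Sum>p\<in>{l1..<l}. snd (snd x) p"]) blast+
  obtain a0 k0 mu0 where x0: "x0 = (a0, k0, mu0)"
    by (cases x0)
  with \<open>x0 \<in> S\<close> have "u (a0, k0, mu0) \<noteq> 0" and "mu0 \<notin> JD1set l1" and "mu0 \<in> Jset l"
    using J by (auto simp: S_def supp_def)
  then obtain q where "l1 \<le> q" and "mu0 q \<noteq> 0"
    by (auto simp: JD1set_def)
  then have "q \<in> {l1..<l}"
    using \<open>mu0 \<in> Jset l\<close> by (auto simp: Jset_def not_less[symmetric])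
  have "u (a0, k0, mu0) = 0"
    using \<open>q \<in> {l1..<l}\<close> \<open>mu0 q \<noteq> 0\<close> max x0
    by (intro centralizer_top_degree_coeff_eq_0[OF fin J B central]) (auto simp: S_def supp_def)
  with \<open>u (a0, k0, mu0) \<noteq> 0\<close> show False ..
qed

theorem mainTheorem4:
  fixes l1 l2 l3 :: nat and G :: "(nat \<Rightarrow> 'a::field_char_0) set"
  assumes "l1 + l2 + l3 > 0"
    and "G \<subseteq> Vspace l1 (l1 + l2 + l3)"
    and "is_additive_subgroup G"
    and "\<exists>B\<subseteq>G. is_basis_of B (Vspace l1 (l1 + l2 + l3))"
  shows "{u \<in> Wset l1 l2 l3 G. \<forall>a\<in>G.
            bracketW (l1 + l2 + l3) u (monoW a (\<lambda>_. 0) (\<lambda>_. 0)) = (\<lambda>_. 0)}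
         = AD1set l1 l2 l3 G"
proof -
  obtain B where B: "B \<subseteq> G" "is_basis_of B (Vspace l1 (l1 + l2 + l3))"
    using assms(4) by blast
  show ?thesis
  proof (intro equalityI subsetI)
    fix u assume "u \<in> {u \<in> Wset l1 l2 l3 G. \<forall>a\<in>G.
        bracketW (l1 + l2 + l3) u (monoW a (\<lambda>_. 0) (\<lambda>_. 0)) = (\<lambda>_. 0)}"
    then show "u \<in> AD1set l1 l2 l3 G"
      using centralizer_subset_AD1set[OF B refl] by blast
  next
    fix u assume u: "u \<in> AD1set l1 l2 l3 G"
    then have "\<forall>a\<in>G. bracketW (l1 + l2 + l3) u (monoW a (\<lambda>_. 0) (\<lambda>_. 0)) = (\<lambda>_. 0)"
      using bracketW_monoW_eq_0_if_AD1set[OF u _ refl] assms(2) by blast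
    with u show "u \<in> {u \<in> Wset l1 l2 l3 G. \<forall>a\<in>G.
        bracketW (l1 + l2 + l3) u (monoW a (\<lambda>_. 0) (\<lambda>_. 0)) = (\<lambda>_. 0)}"
      by (simp add: AD1set_def)
  qed
qed

end
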